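(* Let $r\ge 2$ and $t\ge 1$ be integers, and let $H$ be an $r$-partite $r$-graph. If $|E(H)|>\frac{t-1}{r}\,|\partial H|$, then $H$ contains (as a subhypergraph) every tight $r$-tree $T$ having $t$ edges.
   Context: An $r$-graph is an $r$-uniform hypergraph. An $r$-graph is $r$-partite if its vertex set can be partitioned into $r$ classes $V_1,\dots,V_r$ such that every edge contains exactly one vertex from each class. The shadow $\partial H$ of an $r$-graph $H$ is the set of all $(r-1)$-element sets contained in some edge of $H$. A tight $r$-tree is any $r$-graph constructed as follows: start with $T_1$ consisting of a single edge $e_1$ and its $r$ vertices; at each step $i\ge 2$ add a new edge $e_i$ containing exactly one new vertex $v_i$ (not in $T_{i-1}$) such that $e_i\setminus\{v_i\}$ is a subset of some edge of $T_{i-1}$, obtaining $T_i$. *)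

theory Defs
  imports Complex_Main
begin

definition r_graph :: "nat \<Rightarrow> 'a set set \<Rightarrow> bool" where
  "r_graph r H \<longleftrightarrow> (\<forall>e\<in>H. finite e \<and> card e = r)"

definition r_partite :: "nat \<Rightarrow> 'a set set \<Rightarrow> bool" where
  "r_partite r H \<longleftrightarrow> (\<exists>c :: 'a \<Rightarrow> nat. (\<forall>v\<in>\<Union>H. c v < r) \<and>
      (\<forall>e\<in>H. \<forall>i<r. card {v\<in>e. c v = i} = 1))"

definition shadow :: "nat \<Rightarrow> 'a set set \<Rightarrow> 'a set set" where
  "shadow r H = {S. \<exists>e\<in>H. S \<subseteq> e \<and> card S = r - 1}"

inductive tight_tree :: "nat \<Rightarrow> 'b set set \<Rightarrow> bool" for r where
  single: "finite e \<Longrightarrow> card e = r \<Longrightarrow> tight_tree r {e}"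
| step: "tight_tree r T \<Longrightarrow> v \<notin> \<Union>T \<Longrightarrow> f \<in> T \<Longrightarrow> S \<subseteq> f \<Longrightarrow> card S = r - 1
          \<Longrightarrow> tight_tree r (insert (insert v S) T)"

definition contains_copy :: "'a set set \<Rightarrow> 'b set set \<Rightarrow> bool" where
  "contains_copy H T \<longleftrightarrow> (\<exists>\<phi> :: 'b \<Rightarrow> 'a. inj_on \<phi> (\<Union>T) \<and> (\<forall>e\<in>T. \<phi> ` e \<in> H))"

end

theory Submission
  imports Defs "HOL-Number_Theory.Cong"
begin

text \<open>
  Colour the vertices of H by its r parts and those of T so that every edge of T is rainbow
  (tight trees are r-partite). For a cyclic shift k of the colours of T, give an (r-1)-set S of
  the shadow the weight w_k(S) = (number of vertices of T whose shifted colour is the colour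
  missing from S) - 1. Summed over the r shifts, w_k(S) is |V(T)| - r = t - 1, so for some
  shift the total weight of the shadow is less than |E(H)|. Repeatedly deleting all edges
  through a shadow set whose codegree is at most its weight therefore leaves a nonempty
  subgraph in which every (r-1)-subset of an edge has more completions than its weight.
  There T embeds greedily, edge by edge, preserving colours: a new vertex of colour j has
  more candidate images than there are vertices of colour j already embedded.
\<close>

section \<open>Shadows, codegrees and rainbow colourings\<close>

definition codegree :: "'a set set \<Rightarrow> 'a set \<Rightarrow> nat" where
  "codegree H A = card {e \<in> H. A \<subseteq> e}"

definition rainbow_colouring :: "nat \<Rightarrow> ('a \<Rightarrow> nat) \<Rightarrow> 'a set set \<Rightarrow> bool" where
  "rainbow_colouring r c H \<longleftrightarrow> (\<forall>e\<in>H. c ` e = {..<r})"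

lemma subset_card_Suc_obtains_remove:
  assumes "finite f" "S \<subseteq> f" "card S + 1 = card f"
  obtains w where "w \<in> f" "S = f - {w}"
proof -
  have "card (f - S) = 1"
    using assms by (simp add: card_Diff_subset finite_subset)
  then obtain w where "f - S = {w}"
    by (meson card_1_singletonE)
  then show thesis
    using that assms(2) by blast
qed

lemma shadow_obtains_remove:
  assumes "r_graph r H" "r \<ge> 1" "S \<in> shadow r H"
  obtains e u where "e \<in> H" "u \<in> e" "S = e - {u}"
proof -
  obtain e where e: "e \<in> H" "S \<subseteq> e" "card S = r - 1"
    using assms(3) by (auto simp: shadow_def)
  then have "finite e" "card S + 1 = card e"
    using assms(1,2) by (auto simp: r_graph_def)
  with e show thesis
    using that subset_card_Suc_obtains_remove[of e S] by blast
qed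

lemma remove_in_shadow:
  assumes "r_graph r H" "e \<in> H" "u \<in> e"
  shows "e - {u} \<in> shadow r H"
  using assms by (auto simp: shadow_def r_graph_def)

lemma finite_shadow:
  assumes "finite H" "r_graph r H"
  shows "finite (shadow r H)"
proof (rule finite_subset)
  show "shadow r H \<subseteq> Pow (\<Union>H)"
    by (auto simp: shadow_def)
  show "finite (Pow (\<Union>H))"
    using assms by (auto simp: r_graph_def)
qed

lemma codegree_eq_card_completions:
  assumes "r_graph r H" "finite A" "card A + 1 = r"
  shows "codegree H A = card {y. y \<notin> A \<and> insert y A \<in> H}"
proof -
  have "bij_betw (\<lambda>y. insert y A) {y. y \<notin> A \<and> insert y A \<in> H} {e \<in> H. A \<subseteq> e}"
  proof (rule bij_betw_imageI)
    show "inj_on (\<lambda>y. insert y A) {y. y \<notin> A \<and> insert y A \<in> H}"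
      by (auto simp: inj_on_def insert_ident)
    show "(\<lambda>y. insert y A) ` {y. y \<notin> A \<and> insert y A \<in> H} = {e \<in> H. A \<subseteq> e}"
    proof (intro equalityI subsetI)
      fix e assume e: "e \<in> {e \<in> H. A \<subseteq> e}"
      then have "finite e" "card A + 1 = card e"
        using assms by (auto simp: r_graph_def)
      then obtain y where "y \<in> e" "A = e - {y}"
        using e subset_card_Suc_obtains_remove by blast
      then have "e = insert y A" "y \<notin> A"
        by auto
      then show "e \<in> (\<lambda>y. insert y A) ` {y. y \<notin> A \<and> insert y A \<in> H}"
        using e by blast
    qed auto
  qed
  then show ?thesis
    unfolding codegree_def by (simp add: bij_betw_same_card)
qed

lemma rainbow_colouring_inj_on:
  assumes "rainbow_colouring r c H" "r_graph r H" "e \<in> H"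
  shows "inj_on c e"
  using assms by (simp add: rainbow_colouring_def r_graph_def eq_card_imp_inj_on)

lemma rainbow_colouring_remove:
  assumes "rainbow_colouring r c H" "r_graph r H" "e \<in> H" "u \<in> e"
  shows "c ` (e - {u}) = {..<r} - {c u}"
  using assms inj_on_image_set_diff[OF rainbow_colouring_inj_on[OF assms(1-3)], of "e" "{u}"]
  by (simp add: rainbow_colouring_def)

lemma rainbow_colouring_completion:
  assumes "rainbow_colouring r c H" "r_graph r H" "insert y A \<in> H" "y \<notin> A"
  shows "c y \<notin> c ` A"
  using rainbow_colouring_remove[OF assms(1-3), of y] assms(4)
  by (simp add: insert_Diff_if)

lemma rainbow_colouring_eq_on_common_facet:
  assumes "rainbow_colouring r c H" "r_graph r H"
    and "insert v S \<in> H" "insert w S \<in> H" "v \<notin> S" "w \<notin> S"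
  shows "c v = c w"
proof -
  have "c ` S = {..<r} - {c v}" "c ` S = {..<r} - {c w}"
    using rainbow_colouring_remove[OF assms(1,2,3), of v] rainbow_colouring_remove[OF assms(1,2,4), of w]
      assms(5,6) by simp_all
  moreover have "c w \<in> {..<r}"
    using assms(1,4) unfolding rainbow_colouring_def by blast
  ultimately show ?thesis
    by (metis Diff_iff singletonD singletonI)
qed

lemma r_partite_obtains_rainbow_colouring:
  assumes "r_partite r H"
  obtains c where "rainbow_colouring r c H"
proof -
  obtain c :: "'a \<Rightarrow> nat" where c: "\<forall>v\<in>\<Union>H. c v < r" "\<forall>e\<in>H. \<forall>i<r. card {v\<in>e. c v = i} = 1"
    using assms unfolding r_partite_def by blast
  have "c ` e = {..<r}" if "e \<in> H" for e
  proof
    show "c ` e \<subseteq> {..<r}"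
      using c(1) that by auto
    show "{..<r} \<subseteq> c ` e"
    proof
      fix i assume "i \<in> {..<r}"
      then have "card {v\<in>e. c v = i} = 1"
        using c(2) that by simp
      then obtain v where "{v\<in>e. c v = i} = {v}"
        by (meson card_1_singletonE)
      then have "v \<in> {v\<in>e. c v = i}"
        by simp
      then show "i \<in> c ` e"
        by blast
    qed
  qed
  then show thesis
    by (intro that[of c]) (simp add: rainbow_colouring_def)
qed

lemma rainbow_colouring_image_Union:
  assumes "rainbow_colouring r d T" "T \<noteq> {}"
  shows "d ` \<Union>T = {..<r}"
  using assms unfolding rainbow_colouring_def by (auto simp: image_Union)

section \<open>Tight trees\<close>

lemma tight_tree_finite: "tight_tree r T \<Longrightarrow> finite T"
  by (induction rule: tight_tree.induct) auto

lemma tight_tree_r_graph: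
  assumes "tight_tree r T" "r \<ge> 1"
  shows "r_graph r T"
  using assms
proof (induction rule: tight_tree.induct)
  case (step T v f S)
  have "finite f"
    using step.IH step.prems step.hyps(3) by (simp add: r_graph_def)
  then have "finite S"
    using finite_subset[OF step.hyps(4)] by blast
  moreover have "v \<notin> S"
    using step.hyps(2-4) by blast
  ultimately show ?case
    using step
    by (simp add: r_graph_def)
qed (simp add: r_graph_def)

lemma tight_tree_card_Union:
  assumes "tight_tree r T" "r \<ge> 1"
  shows "card (\<Union>T) + 1 = r + card T"
  using assms
proof (induction rule: tight_tree.induct)
  case (step T v f S)
  have "finite (\<Union>T)"
    using tight_tree_finite[OF step.hyps(1)] tight_tree_r_graph[OF step.hyps(1) step.prems]
    by (auto simp: r_graph_def)
  moreover have "finite T" "insert v S \<notin> T" "\<Union>(insert (insert v S) T) = insert v (\<Union>T)"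
    using tight_tree_finite[OF step.hyps(1)] step.hyps by auto
  ultimately show ?case
    using step by simp
qed simp

lemma tight_tree_obtains_rainbow_colouring:
  assumes "tight_tree r T" "r \<ge> 1"
  obtains d where "rainbow_colouring r d T"
proof -
  have "\<exists>d. rainbow_colouring r d T"
    using assms
  proof (induction rule: tight_tree.induct)
    case (single e)
    then obtain h where "bij_betw h e {..<r}"
      by (metis ex_bij_betw_finite_nat lessThan_atLeast0)
    then show ?case
      by (auto simp: bij_betw_def rainbow_colouring_def)
  next
    case (step T v f S)
    then obtain d where d: "rainbow_colouring r d T"
      by blast
    have "r_graph r T"
      using tight_tree_r_graph step by blast
    then have "finite f" "card S + 1 = card f"
      using step by (auto simp: r_graph_def)
    then obtain w where w: "w \<in> f" "S = f - {w}"
      using subset_card_Suc_obtains_remove step.hyps(4) by blast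
    define d' where "d' = d(v := d w)"
    have "d' ` e = d ` e" if "e \<in> T" for e
      using step.hyps(2) that unfolding d'_def by auto
    moreover have "d' ` insert v S = {..<r}"
    proof -
      have "d' ` insert v S = insert (d w) (d ` (f - {w}))"
        using step.hyps(2,3) w unfolding d'_def by auto
      also have "\<dots> = insert (d w) ({..<r} - {d w})"
        using rainbow_colouring_remove[OF d \<open>r_graph r T\<close> step.hyps(3) w(1)] by simp
      also have "\<dots> = {..<r}"
        using d step.hyps(3) w(1) unfolding rainbow_colouring_def by blast
      finally show ?thesis .
    qed
    ultimately show ?case
      using d unfolding rainbow_colouring_def by auto
  qed
  then show thesis
    using that by blast
qed

section \<open>Deleting edges through light shadow sets\<close>

lemma card_eq_card_Diff_star_plus_codegree:
  assumes "finite H"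
  shows "card H = card {e \<in> H. \<not> S \<subseteq> e} + codegree H S"
proof -
  have "H = {e \<in> H. \<not> S \<subseteq> e} \<union> {e \<in> H. S \<subseteq> e}"
    "{e \<in> H. \<not> S \<subseteq> e} \<inter> {e \<in> H. S \<subseteq> e} = {}"
    by auto
  then show ?thesis
    unfolding codegree_def using assms card_Un_disjoint[of "{e \<in> H. \<not> S \<subseteq> e}" "{e \<in> H. S \<subseteq> e}"]
    by simp
qed

lemma sum_shadow_Diff_star_le:
  fixes W :: "'a set \<Rightarrow> nat"
  assumes "finite H" "r_graph r H" "S \<in> shadow r H"
  shows "(\<Sum>S'\<in>shadow r {e \<in> H. \<not> S \<subseteq> e}. W S') + W S \<le> (\<Sum>S'\<in>shadow r H. W S')"
proof -
  have "finite (shadow r H)"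
    by (rule finite_shadow[OF assms(1,2)])
  moreover have "shadow r {e \<in> H. \<not> S \<subseteq> e} \<subseteq> shadow r H - {S}"
    unfolding shadow_def by blast
  ultimately have "(\<Sum>S'\<in>shadow r {e \<in> H. \<not> S \<subseteq> e}. W S') \<le> (\<Sum>S'\<in>shadow r H - {S}. W S')"
    by (intro sum_mono2) auto
  also have "\<dots> + W S = (\<Sum>S'\<in>shadow r H. W S')"
    using assms(3) \<open>finite (shadow r H)\<close> by (simp add: sum.remove)
  finally show ?thesis
    by simp
qed

lemma exists_subgraph_codegree_gt:
  fixes W :: "'a set \<Rightarrow> nat"
  assumes "finite H" "r_graph r H" "(\<Sum>S\<in>shadow r H. W S) < card H"
  shows "\<exists>H'\<subseteq>H. H' \<noteq> {} \<and> (\<forall>e\<in>H'. \<forall>u\<in>e. W (e - {u}) < codegree H' (e - {u}))"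
  using assms
proof (induction "card H" arbitrary: H rule: less_induct)
  case less
  show ?case
  proof (cases "\<forall>e\<in>H. \<forall>u\<in>e. W (e - {u}) < codegree H (e - {u})")
    case True
    moreover have "H \<noteq> {}"
      using less.prems(3) by (metis card.empty not_less_zero)
    ultimately show ?thesis
      by blast
  next
    case False
    then obtain e u where eu: "e \<in> H" "u \<in> e" and light: "codegree H (e - {u}) \<le> W (e - {u})"
      by (meson not_less)
    define S where "S = e - {u}"
    define H2 where "H2 = {e' \<in> H. \<not> S \<subseteq> e'}"
    have H2: "finite H2" "r_graph r H2"
      using less.prems(1,2) unfolding H2_def r_graph_def by auto
    have card_H: "card H = card H2 + codegree H S"
      unfolding H2_def by (rule card_eq_card_Diff_star_plus_codegree[OF less.prems(1)])
    have "codegree H S > 0"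
      unfolding codegree_def S_def using less.prems(1) eu by (auto simp: card_gt_0_iff)
    have "S \<in> shadow r H"
      unfolding S_def by (rule remove_in_shadow[OF less.prems(2) eu])
    then have "(\<Sum>S'\<in>shadow r H2. W S') + W S \<le> (\<Sum>S'\<in>shadow r H. W S')"
      unfolding H2_def by (rule sum_shadow_Diff_star_le[OF less.prems(1,2)])
    then have "(\<Sum>S'\<in>shadow r H2. W S') < card H2"
      using card_H less.prems(3) light unfolding S_def by linarith
    moreover have "card H2 < card H"
      using card_H \<open>codegree H S > 0\<close> by linarith
    ultimately obtain H' where "H' \<subseteq> H2" "H' \<noteq> {}"
        "\<forall>e\<in>H'. \<forall>u\<in>e. W (e - {u}) < codegree H' (e - {u})"
      using less.hyps[OF _ H2] by blast
    then show ?thesis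
      unfolding H2_def by blast
  qed
qed

section \<open>Cyclic shifts of a colouring\<close>

lemma bij_betw_add_mod_lessThan:
  assumes "0 < (r::nat)"
  shows "bij_betw (\<lambda>i. (i + k) mod r) {..<r} {..<r}"
proof -
  have "inj_on (\<lambda>i. (i + k) mod r) {..<r}"
  proof (rule inj_onI)
    fix i j assume "i \<in> {..<r}" "j \<in> {..<r}" "(i + k) mod r = (j + k) mod r"
    then show "i = j"
      by (metis cong_add_rcancel_nat cong_def cong_less_modulus_unique_nat lessThan_iff)
  qed
  moreover have "(\<lambda>i. (i + k) mod r) ` {..<r} \<subseteq> {..<r}"
    using assms by auto
  ultimately show ?thesis
    by (simp add: bij_betw_def endo_inj_surj)
qed

lemma image_add_mod_eq_lessThan:
  fixes d :: "'a \<Rightarrow> nat"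
  assumes "0 < (r::nat)" "d ` X = {..<r}"
  shows "(\<lambda>x. (d x + k) mod r) ` X = {..<r}"
proof -
  have "(\<lambda>x. (d x + k) mod r) ` X = (\<lambda>i. (i + k) mod r) ` d ` X"
    by (simp add: image_image)
  then show ?thesis
    using assms bij_betw_add_mod_lessThan[OF assms(1), of k] by (simp add: bij_betw_def)
qed

lemma rainbow_colouring_add_mod:
  fixes d :: "'a \<Rightarrow> nat"
  assumes "rainbow_colouring r d T" "0 < r"
  shows "rainbow_colouring r (\<lambda>x. (d x + k) mod r) T"
  using assms unfolding rainbow_colouring_def by (simp add: image_add_mod_eq_lessThan)

lemma sum_add_mod_indicator:
  assumes "j < (r::nat)"
  shows "(\<Sum>k<r. if (i + k) mod r = j then 1 else 0) = (1::nat)"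
proof -
  have "0 < r"
    using assms by simp
  have "(\<Sum>k<r. if (i + k) mod r = j then 1 else 0) = (\<Sum>m<r. if m = j then 1 else (0::nat))"
    using sum.reindex_bij_betw[OF bij_betw_add_mod_lessThan[OF \<open>0 < r\<close>, of i],
        of "\<lambda>m. if m = j then 1 else 0"]
    by (simp add: add.commute)
  then show ?thesis
    using assms by simp
qed

lemma sum_card_add_mod_eq:
  fixes d :: "'a \<Rightarrow> nat"
  assumes "finite V" "j < r"
  shows "(\<Sum>k<r. card {x\<in>V. (d x + k) mod r = j}) = card V"
proof -
  have "(\<Sum>k<r. card {x\<in>V. (d x + k) mod r = j})
      = (\<Sum>k<r. \<Sum>x\<in>V. if (d x + k) mod r = j then 1 else 0)"
    using assms(1) by (simp add: sum.inter_filter[symmetric])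
  also have "\<dots> = (\<Sum>x\<in>V. \<Sum>k<r. if (d x + k) mod r = j then 1 else 0)"
    by (rule sum.swap)
  also have "\<dots> = card V"
    using sum_add_mod_indicator[OF assms(2)] by simp
  finally show ?thesis .
qed

lemma sum_card_add_mod_eq_minus_one:
  fixes d :: "'a \<Rightarrow> nat"
  assumes "finite V" "d ` V = {..<r}" "j < r"
  shows "(\<Sum>k<r. card {x\<in>V. (d x + k) mod r = j} - 1) = card V - r"
proof -
  have "1 \<le> card {x\<in>V. (d x + k) mod r = j}" for k
  proof -
    have "j \<in> (\<lambda>x. (d x + k) mod r) ` V"
      using assms image_add_mod_eq_lessThan[OF _ assms(2)] by auto
    then show ?thesis
      using assms(1) by (auto simp: Suc_le_eq card_gt_0_iff)
  qed
  then have "(\<Sum>k<r. card {x\<in>V. (d x + k) mod r = j} - 1)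
      = (\<Sum>k<r. card {x\<in>V. (d x + k) mod r = j}) - (\<Sum>k<r. 1)"
    by (intro sum_subtractf_nat) auto
  then show ?thesis
    using sum_card_add_mod_eq[OF assms(1,3)] by simp
qed

lemma exists_shift_sum_shadow_lt:
  assumes "r_graph r H" "rainbow_colouring r c H" "r \<ge> 1"
    and "finite V" "d ` V = {..<r}"
    and "(card V - r) * card (shadow r H) < r * card H"
  obtains k where
    "(\<Sum>S\<in>shadow r H. card {x\<in>V. (d x + k) mod r \<notin> c ` S} - 1) < card H"
proof -
  define W where "W k S = card {x\<in>V. (d x + k) mod r \<notin> c ` S} - 1" for k S
  have "(\<Sum>k<r. W k S) = card V - r" if S: "S \<in> shadow r H" for S
  proof -
    obtain e u where eu: "e \<in> H" "u \<in> e" and "S = e - {u}"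
      using shadow_obtains_remove[OF assms(1,3) S] .
    then have cS: "c ` S = {..<r} - {c u}"
      using rainbow_colouring_remove[OF assms(2,1)] by simp
    have "c u < r"
      using assms(2) eu unfolding rainbow_colouring_def by blast
    then have "W k S = card {x\<in>V. (d x + k) mod r = c u} - 1" for k
      unfolding W_def using cS assms(3) by (intro arg_cong[where f = "\<lambda>n. card n - 1"]) auto
    then show ?thesis
      using sum_card_add_mod_eq_minus_one[OF assms(4,5) \<open>c u < r\<close>] by simp
  qed
  then have sum_W: "(\<Sum>k<r. \<Sum>S\<in>shadow r H. W k S) = (card V - r) * card (shadow r H)"
    by (simp add: sum.swap[where B = "shadow r H"])
  have "\<exists>k<r. (\<Sum>S\<in>shadow r H. W k S) < card H"
  proof (rule ccontr)
    assume "\<not> ?thesis"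
    then have "\<forall>k<r. card H \<le> (\<Sum>S\<in>shadow r H. W k S)"
      by (meson not_less)
    then have "(\<Sum>k<r. card H) \<le> (\<Sum>k<r. \<Sum>S\<in>shadow r H. W k S)"
      by (intro sum_mono) simp
    then show False
      using sum_W assms(6) by simp
  qed
  then obtain k where "(\<Sum>S\<in>shadow r H. W k S) < card H"
    by blast
  then show thesis
    unfolding W_def by (rule that)
qed

lemma exists_shift_subgraph_codegree_ge:
  assumes "finite H" "r_graph r H" "rainbow_colouring r c H" "r \<ge> 1"
    and "finite V" "d ` V = {..<r}"
    and "(card V - r) * card (shadow r H) < r * card H"
  obtains k H' where "H' \<subseteq> H" "H' \<noteq> {}"
    "\<forall>h\<in>H'. \<forall>u\<in>h. card {x\<in>V. (d x + k) mod r \<notin> c ` (h - {u})} \<le> codegree H' (h - {u})"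
proof -
  obtain k where light:
    "(\<Sum>S\<in>shadow r H. card {x\<in>V. (d x + k) mod r \<notin> c ` S} - 1) < card H"
    by (rule exists_shift_sum_shadow_lt[OF assms(2-7)])
  obtain H' where "H' \<subseteq> H" "H' \<noteq> {}" and heavy:
      "\<forall>h\<in>H'. \<forall>u\<in>h. card {x\<in>V. (d x + k) mod r \<notin> c ` (h - {u})} - 1 < codegree H' (h - {u})"
    using exists_subgraph_codegree_gt[OF assms(1,2) light] by blast
  have
    "\<forall>h\<in>H'. \<forall>u\<in>h. card {x\<in>V. (d x + k) mod r \<notin> c ` (h - {u})} \<le> codegree H' (h - {u})"
    using heavy by fastforce
  with \<open>H' \<subseteq> H\<close> \<open>H' \<noteq> {}\<close> show thesis
    by (rule that)
qed

section \<open>Greedy colour-preserving embedding\<close>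

definition colour_embedding ::
    "('b \<Rightarrow> 'a) \<Rightarrow> ('a \<Rightarrow> nat) \<Rightarrow> ('b \<Rightarrow> nat) \<Rightarrow> 'b set set \<Rightarrow> 'a set set \<Rightarrow> bool" where
  "colour_embedding \<phi> c d T H \<longleftrightarrow>
     inj_on \<phi> (\<Union>T) \<and> (\<forall>x\<in>\<Union>T. c (\<phi> x) = d x) \<and> (\<forall>e\<in>T. \<phi> ` e \<in> H)"

lemma colour_embedding_edge:
  assumes "rainbow_colouring r d {e}" "r_graph r {e}"
    and "rainbow_colouring r c H" "r_graph r H" "h \<in> H"
  shows "colour_embedding (the_inv_into h c \<circ> d) c d {e} H"
proof -
  have "bij_betw c h {..<r}"
    using assms(3-5) rainbow_colouring_inj_on[OF assms(3-5)]
    by (simp add: bij_betw_def rainbow_colouring_def)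
  then have inv: "bij_betw (the_inv_into h c) {..<r} h"
    by (rule bij_betw_the_inv_into)
  have de: "d ` e = {..<r}" "inj_on d e"
    using assms(1) rainbow_colouring_inj_on[OF assms(1,2)] by (auto simp: rainbow_colouring_def)
  have "c (the_inv_into h c (d x)) = d x" if "x \<in> e" for x
    using \<open>bij_betw c h {..<r}\<close> de(1) that
    by (metis bij_betw_def f_the_inv_into_f imageI)
  moreover have "inj_on (the_inv_into h c \<circ> d) e"
    using inv de by (simp add: bij_betw_def comp_inj_on)
  moreover have "(the_inv_into h c \<circ> d) ` e = h"
    using inv de(1) by (metis bij_betw_imp_surj_on image_comp)
  ultimately show ?thesis
    using assms(5) by (simp add: colour_embedding_def)
qed

lemma colour_embedding_fun_upd:
  assumes "colour_embedding \<phi> c d T H" "v \<notin> \<Union>T" "S \<subseteq> \<Union>T"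
    and "y \<notin> \<phi> ` \<Union>T" "c y = d v" "insert y (\<phi> ` S) \<in> H"
  shows "colour_embedding (\<phi>(v := y)) c d (insert (insert v S) T) H"
proof -
  have agree: "(\<phi>(v := y)) ` X = \<phi> ` X" if "X \<subseteq> \<Union>T" for X
    using assms(2) that by auto
  have "\<Union>T - {v} = \<Union>T"
    using assms(2) by blast
  then have "inj_on (\<phi>(v := y)) (insert v (\<Union>T))"
    using assms(1,4) agree[of "\<Union>T"] by (simp add: colour_embedding_def inj_on_fun_updI)
  moreover have "\<forall>x\<in>insert v (\<Union>T). c ((\<phi>(v := y)) x) = d x"
    using assms(1,2,5) by (auto simp: colour_embedding_def)
  moreover have "(\<phi>(v := y)) ` e \<in> H" if "e \<in> insert (insert v S) T" for e
  proof (cases "e \<in> T")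
    case True
    then have "(\<phi>(v := y)) ` e = \<phi> ` e"
      by (intro agree) blast
    then show ?thesis
      using True assms(1) unfolding colour_embedding_def by simp
  next
    case False
    then have "e = insert v S"
      using that by blast
    then have "(\<phi>(v := y)) ` e = insert y (\<phi> ` S)"
      by (simp only: image_insert fun_upd_same agree[OF assms(3)])
    then show ?thesis
      using assms(6) by simp
  qed
  moreover have "\<Union>(insert (insert v S) T) = insert v (\<Union>T)"
    using assms(3) by blast
  ultimately show ?thesis
    unfolding colour_embedding_def by simp
qed

lemma exists_fresh_completion:
  assumes "r_graph r H" "rainbow_colouring r c H" "h \<in> H" "u \<in> h" "c u = d v"
    and "\<forall>x\<in>U. c (\<phi> x) = d x" "finite V" "U \<subseteq> V" "v \<in> V - U"
    and "card {x\<in>V. d x \<notin> c ` (h - {u})} \<le> codegree H (h - {u})"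
  obtains y where "y \<notin> \<phi> ` U" "c y = d v" "insert y (h - {u}) \<in> H"
proof -
  define A where "A = h - {u}"
  have "finite h" "card h = r"
    using assms(1,3) by (auto simp: r_graph_def)
  moreover have "0 < card h"
    using \<open>finite h\<close> assms(4) card_gt_0_iff by blast
  ultimately have "finite A" "card A + 1 = r"
    unfolding A_def using assms(4) by (simp_all add: card_Diff_singleton)
  have colours_A: "c ` A = {..<r} - {d v}"
    unfolding A_def using rainbow_colouring_remove[OF assms(2,1,3,4)] assms(5) by simp
  define Z where "Z = {y. y \<notin> A \<and> insert y A \<in> H}"
  define B where "B = \<phi> ` {x\<in>U. d x \<notin> c ` A}"
  have "finite {x\<in>U. d x \<notin> c ` A}"
    using assms(7,8) by (auto intro: finite_subset)
  then have "finite B"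
    unfolding B_def by blast
  have "card B \<le> card {x\<in>U. d x \<notin> c ` A}"
    unfolding B_def using \<open>finite {x\<in>U. d x \<notin> c ` A}\<close> by (rule card_image_le)
  also have "\<dots> < card {x\<in>V. d x \<notin> c ` A}"
    using colours_A assms(7-9) by (intro psubset_card_mono) auto
  also have "\<dots> \<le> card Z"
    using assms(10) codegree_eq_card_completions[OF assms(1) \<open>finite A\<close> \<open>card A + 1 = r\<close>]
    unfolding Z_def A_def by simp
  finally have "\<not> Z \<subseteq> B"
    using \<open>finite B\<close> card_mono leD by blast
  then obtain y where y: "y \<notin> A" "insert y A \<in> H" "y \<notin> B"
    unfolding Z_def by blast
  have "c y \<notin> c ` A"
    using rainbow_colouring_completion[OF assms(2,1) y(2,1)] .
  moreover have "c y \<in> {..<r}"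
    using assms(2) y(2) unfolding rainbow_colouring_def by blast
  ultimately have "c y = d v"
    using colours_A by blast
  moreover have "y \<notin> \<phi> ` U"
    using y(3) \<open>c y \<notin> c ` A\<close> assms(6) unfolding B_def by auto
  ultimately show thesis
    using that y(2) unfolding A_def by blast
qed

lemma tight_tree_colour_embedding:
  assumes "tight_tree r T" "r \<ge> 1" "\<Union>T \<subseteq> V" "finite V" "rainbow_colouring r d T"
    and "H \<noteq> {}" "r_graph r H" "rainbow_colouring r c H"
    and "\<forall>h\<in>H. \<forall>u\<in>h. card {x\<in>V. d x \<notin> c ` (h - {u})} \<le> codegree H (h - {u})"
  shows "\<exists>\<phi>. colour_embedding \<phi> c d T H"
  using assms
proof (induction rule: tight_tree.induct)
  case (single e)
  then obtain h where "h \<in> H"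
    by blast
  moreover have "r_graph r {e}"
    using single by (simp add: r_graph_def)
  ultimately show ?case
    using colour_embedding_edge single by blast
next
  case (step T v f S)
  let ?T' = "insert (insert v S) T"
  have "r_graph r T" "r_graph r ?T'"
    using tight_tree_r_graph[OF step.hyps(1) step.prems(1)]
      tight_tree_r_graph[OF tight_tree.step[OF step.hyps(1-5)] step.prems(1)] by blast+
  then have f: "finite f" "card S + 1 = card f"
    using step.hyps(3,5) step.prems(1) by (auto simp: r_graph_def)
  obtain w where w: "w \<in> f" "S = f - {w}"
    by (rule subset_card_Suc_obtains_remove[OF f(1) step.hyps(4) f(2)])
  have "rainbow_colouring r d T"
    using step.prems(4) by (simp add: rainbow_colouring_def)
  then obtain \<phi> where \<phi>: "colour_embedding \<phi> c d T H"
    using step.IH step.prems by blast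
  have "inj_on \<phi> (\<Union>T)" "\<forall>x\<in>\<Union>T. c (\<phi> x) = d x" "\<phi> ` f \<in> H"
    using \<phi> step.hyps(3) by (auto simp: colour_embedding_def)
  have "f \<subseteq> \<Union>T" "S \<subseteq> \<Union>T"
    using step.hyps(3,4) by blast+
  have "insert w S = f" "w \<notin> S" "v \<notin> S"
    using w step.hyps(2-4) by auto
  then have "d w = d v"
    using rainbow_colouring_eq_on_common_facet[OF step.prems(4) \<open>r_graph r ?T'\<close>, of w S v]
      step.hyps(3) by simp
  then have "c (\<phi> w) = d v"
    using \<open>\<forall>x\<in>\<Union>T. c (\<phi> x) = d x\<close> \<open>f \<subseteq> \<Union>T\<close> w(1) by auto
  moreover have "\<Union>T \<subseteq> V" "v \<in> V - \<Union>T"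
    using step.prems(2) step.hyps(2) by auto
  ultimately obtain y where y: "y \<notin> \<phi> ` \<Union>T" "c y = d v" "insert y (\<phi> ` f - {\<phi> w}) \<in> H"
    using exists_fresh_completion[OF step.prems(6,7) \<open>\<phi> ` f \<in> H\<close> imageI[OF w(1)] _
        \<open>\<forall>x\<in>\<Union>T. c (\<phi> x) = d x\<close> step.prems(3) _ _
        step.prems(8)[rule_format, OF \<open>\<phi> ` f \<in> H\<close> imageI[OF w(1)]]]
    by blast
  moreover have "\<phi> ` f - {\<phi> w} = \<phi> ` S"
    unfolding w(2) using inj_on_image_set_diff[OF \<open>inj_on \<phi> (\<Union>T)\<close>, of f "{w}"] w(1) \<open>f \<subseteq> \<Union>T\<close>
    by auto
  ultimately have "colour_embedding (\<phi>(v := y)) c d ?T' H"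
    using colour_embedding_fun_upd[OF \<phi> step.hyps(2) \<open>S \<subseteq> \<Union>T\<close>] by simp
  then show ?case
    by blast
qed

theorem theorem1p2:
  fixes r t :: nat and H :: "'a set set" and T :: "'b set set"
  assumes "r \<ge> 2" and "t \<ge> 1"
    and "finite H" and "r_graph r H" and "r_partite r H"
    and "real (card H) > (real t - 1) / real r * real (card (shadow r H))"
    and "tight_tree r T" and "card T = t"
  shows "contains_copy H T"
proof -
  have r: "r \<ge> 1" and "0 < r"
    using assms(1) by simp_all
  obtain c where c: "rainbow_colouring r c H"
    using r_partite_obtains_rainbow_colouring[OF assms(5)] .
  obtain d where d: "rainbow_colouring r d T"
    using tight_tree_obtains_rainbow_colouring[OF assms(7) r] .
  have "finite (\<Union>T)"
    using tight_tree_finite[OF assms(7)] tight_tree_r_graph[OF assms(7) r] by (auto simp: r_graph_def)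
  have "d ` \<Union>T = {..<r}"
    using rainbow_colouring_image_Union[OF d] assms(2,8) by (metis card.empty not_one_le_zero)
  have "(card (\<Union>T) - r) * card (shadow r H) < r * card H"
  proof -
    have "real (t - 1) * real (card (shadow r H)) < real r * real (card H)"
      using assms(2,6) r by (simp add: of_nat_diff field_simps)
    then have "(t - 1) * card (shadow r H) < r * card H"
      by (metis of_nat_less_iff of_nat_mult)
    moreover have "card (\<Union>T) - r = t - 1"
      using tight_tree_card_Union[OF assms(7) r] assms(8) by simp
    ultimately show ?thesis
      by simp
  qed
  then obtain k H' where H': "H' \<subseteq> H" "H' \<noteq> {}" and codegree_H':
      "\<forall>h\<in>H'. \<forall>u\<in>h. card {x\<in>\<Union>T. (d x + k) mod r \<notin> c ` (h - {u})} \<le> codegree H' (h - {u})"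
    by (rule exists_shift_subgraph_codegree_ge[OF assms(3,4) c r \<open>finite (\<Union>T)\<close>
        \<open>d ` \<Union>T = {..<r}\<close>])
  have "r_graph r H'" "rainbow_colouring r c H'"
    using H'(1) assms(4) c unfolding r_graph_def rainbow_colouring_def by blast+
  then obtain \<phi> where "colour_embedding \<phi> c (\<lambda>x. (d x + k) mod r) T H'"
    using tight_tree_colour_embedding[OF assms(7) r order_refl \<open>finite (\<Union>T)\<close>
        rainbow_colouring_add_mod[OF d \<open>0 < r\<close>] H'(2) _ _ codegree_H'] by blast
  then show ?thesis
    unfolding contains_copy_def colour_embedding_def using H'(1) by (intro exI[of _ \<phi>]) blast
qed

end
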